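(* If a RiFle assignment game is non-degenerate, then the set of its stable outcomes is a compact (complete) lattice under the partial order $\ge_P$. In particular, there are a unique $P$-optimal stable outcome (the maximum under $\ge_P$) and a unique $Q$-optimal stable outcome (the minimum under $\ge_P$).
   Context: A RiFle assignment game consists of two disjoint sets of agents $P=\{p_1,\dots,p_n\}$ and $Q=\{q_1,\dots,q_n\}$, a pair of nonnegative real numbers $(\beta_{ij},\gamma_{ij})$ for every pair $(p_i,q_j)\in P\times Q$ (write $\alpha_{ij}=\beta_{ij}+\gamma_{ij}$), and a designation of every agent as rigid or flexible. Let $\mathcal R$ be the set of pairs with at least one rigid agent and $\mathcal F$ the set of pairs with both agents flexible. An outcome $(\bar u,\bar v;\mu)$ consists of a matching $\mu$ between $P$ and $Q$ (write $p_i\stackrel{\mu}{\longleftrightarrow} q_j$) and payoff vectors $\bar u,\bar v\in\mathbb R^n$. It is feasible if: (1) $u_i\ge0$, $v_j\ge0$; (2) if a rigid $p_i$ is matched to $q_j$ then $u_i=\beta_{ij}$ and, if $q_j$ is flexible, $v_j\ge\gamma_{ij}$; symmetrically for a rigid $q_j$ matched to $p_i$: $v_j=\gamma_{ij}$ and, if $p_i$ is flexible, $u_i\ge\beta_{ij}$; (3) $\sum_iu_i+\sum_jv_j=\sum_{p_i\stackrel{\mu}{\longleftrightarrow}q_j}\alpha_{ij}$. It is stable if feasible and $u_i+v_j\ge\alpha_{ij}$ for $(p_i,q_j)\in\mathcal F$ and ($u_i\ge\beta_{ij}$ or $v_j\ge\gamma_{ij}$) for $(p_i,q_j)\in\mathcal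 R$. Reservation prices are modeled by rigid dummy agents; for the following definition an agent left unmatched by a matching is regarded as matched to a rigid dummy agent (whose prescribed share for him is his reservation price). Given a coalition $C\subseteq P\cup Q$ and a matching $\mu$, the total payoff to $C$ under $\mu$ is forced if every pair matched under $\mu$ with one agent in $C$ and the other outside $C$ contains a rigid agent; the forced payoff is then $\sum_{p_i\in C,\ p_i\stackrel{\mu}{\longleftrightarrow}q_j}\beta_{ij}+\sum_{q_j\in C,\ p_i\stackrel{\mu}{\longleftrightarrow}q_j}\gamma_{ij}$. The game is non-degenerate if for any two matchings $\mu,\mu'$: whenever $C$ is a minimal coalition such that the payoff to $C$ is forced under both $\mu$ and $\mu'$, and the two forced payoffs are equal, then $\mu$ and $\mu'$ coincide on $C$. For outcomes, $(\bar u,\bar v;\mu)\ge_P(\bar u',\bar v';\mu')$ means $\bar u\ge\bar u'$ and $\bar v\le\bar v'$ componentwise. *)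

theory Defs
  imports Complex_Main
begin

(* Agents: P = {p_i | i :: 'n}, Q = {q_j | j :: 'n}, with 'n a finite index type (n = CARD('n)).
   A game is given by beta, gamma :: 'n => 'n => real and rigidity predicates
   rP (for P-agents) and rQ (for Q-agents).
   A matching is a bijection sigma :: 'n => 'n, meaning p_i <-> q_(sigma i). *)

definition alpha :: "('n \<Rightarrow> 'n \<Rightarrow> real) \<Rightarrow> ('n \<Rightarrow> 'n \<Rightarrow> real) \<Rightarrow> 'n \<Rightarrow> 'n \<Rightarrow> real" where
  "alpha \<beta> \<gamma> i j = \<beta> i j + \<gamma> i j"

type_synonym 'n outcome = "('n \<Rightarrow> real) \<times> ('n \<Rightarrow> real) \<times> ('n \<Rightarrow> 'n)"

definition feasible ::
  "('n::finite \<Rightarrow> 'n \<Rightarrow> real) \<Rightarrow> ('n \<Rightarrow> 'n \<Rightarrow> real) \<Rightarrow> ('n \<Rightarrow> bool) \<Rightarrow> ('n \<Rightarrow> bool)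
     \<Rightarrow> 'n outcome \<Rightarrow> bool" where
  "feasible \<beta> \<gamma> rP rQ x \<longleftrightarrow>
     (case x of (u, v, \<sigma>) \<Rightarrow>
        bij \<sigma> \<and>
        (\<forall>i. 0 \<le> u i) \<and> (\<forall>j. 0 \<le> v j) \<and>
        (\<forall>i. rP i \<longrightarrow> u i = \<beta> i (\<sigma> i) \<and> (\<not> rQ (\<sigma> i) \<longrightarrow> \<gamma> i (\<sigma> i) \<le> v (\<sigma> i))) \<and>
        (\<forall>i. rQ (\<sigma> i) \<longrightarrow> v (\<sigma> i) = \<gamma> i (\<sigma> i) \<and> (\<not> rP i \<longrightarrow> \<beta> i (\<sigma> i) \<le> u i)) \<and>
        (\<Sum>i\<in>UNIV. u i) + (\<Sum>j\<in>UNIV. v j) = (\<Sum>i\<in>UNIV. alpha \<beta> \<gamma> i (\<sigma> i)))"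

definition rifle_stable ::
  "('n::finite \<Rightarrow> 'n \<Rightarrow> real) \<Rightarrow> ('n \<Rightarrow> 'n \<Rightarrow> real) \<Rightarrow> ('n \<Rightarrow> bool) \<Rightarrow> ('n \<Rightarrow> bool)
     \<Rightarrow> 'n outcome \<Rightarrow> bool" where
  "rifle_stable \<beta> \<gamma> rP rQ x \<longleftrightarrow> feasible \<beta> \<gamma> rP rQ x \<and>
     (case x of (u, v, \<sigma>) \<Rightarrow>
        (\<forall>i j. \<not> rP i \<and> \<not> rQ j \<longrightarrow> alpha \<beta> \<gamma> i j \<le> u i + v j) \<and>
        (\<forall>i j. rP i \<or> rQ j \<longrightarrow> \<beta> i j \<le> u i \<or> \<gamma> i j \<le> v j))"

(* Coalition C = {p_i | i \<in> CP} \<union> {q_j | j \<in> CQ}. *)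
definition forced :: "('n \<Rightarrow> bool) \<Rightarrow> ('n \<Rightarrow> bool) \<Rightarrow> ('n \<Rightarrow> 'n) \<Rightarrow> 'n set \<Rightarrow> 'n set \<Rightarrow> bool" where
  "forced rP rQ \<sigma> CP CQ \<longleftrightarrow> (\<forall>i. (i \<in> CP) \<noteq> (\<sigma> i \<in> CQ) \<longrightarrow> rP i \<or> rQ (\<sigma> i))"

definition forced_payoff ::
  "('n::finite \<Rightarrow> 'n \<Rightarrow> real) \<Rightarrow> ('n \<Rightarrow> 'n \<Rightarrow> real) \<Rightarrow> ('n \<Rightarrow> 'n) \<Rightarrow> 'n set \<Rightarrow> 'n set \<Rightarrow> real" where
  "forced_payoff \<beta> \<gamma> \<sigma> CP CQ =
     (\<Sum>i\<in>CP. \<beta> i (\<sigma> i)) + (\<Sum>i\<in>{i. \<sigma> i \<in> CQ}. \<gamma> i (\<sigma> i))"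

definition minimal_forced_both ::
  "('n \<Rightarrow> bool) \<Rightarrow> ('n \<Rightarrow> bool) \<Rightarrow> ('n \<Rightarrow> 'n) \<Rightarrow> ('n \<Rightarrow> 'n) \<Rightarrow> 'n set \<Rightarrow> 'n set \<Rightarrow> bool" where
  "minimal_forced_both rP rQ \<sigma> \<sigma>' CP CQ \<longleftrightarrow>
     (CP \<noteq> {} \<or> CQ \<noteq> {}) \<and> forced rP rQ \<sigma> CP CQ \<and> forced rP rQ \<sigma>' CP CQ \<and>
     (\<forall>CP' CQ'. CP' \<subseteq> CP \<and> CQ' \<subseteq> CQ \<and> (CP' \<noteq> {} \<or> CQ' \<noteq> {}) \<and>
        forced rP rQ \<sigma> CP' CQ' \<and> forced rP rQ \<sigma>' CP' CQ' \<longrightarrow> CP' = CP \<and> CQ' = CQ)"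

definition non_degenerate ::
  "('n::finite \<Rightarrow> 'n \<Rightarrow> real) \<Rightarrow> ('n \<Rightarrow> 'n \<Rightarrow> real) \<Rightarrow> ('n \<Rightarrow> bool) \<Rightarrow> ('n \<Rightarrow> bool) \<Rightarrow> bool" where
  "non_degenerate \<beta> \<gamma> rP rQ \<longleftrightarrow>
     (\<forall>\<sigma> \<sigma>' CP CQ. bij \<sigma> \<and> bij \<sigma>' \<and> minimal_forced_both rP rQ \<sigma> \<sigma>' CP CQ \<and>
        forced_payoff \<beta> \<gamma> \<sigma> CP CQ = forced_payoff \<beta> \<gamma> \<sigma>' CP CQ \<longrightarrow>
        (\<forall>i\<in>CP. \<sigma> i = \<sigma>' i) \<and> (\<forall>j\<in>CQ. inv \<sigma> j = inv \<sigma>' j))"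

definition geP :: "'n outcome \<Rightarrow> 'n outcome \<Rightarrow> bool" where
  "geP x y \<longleftrightarrow> (\<forall>i. fst y i \<le> fst x i) \<and> (\<forall>j. fst (snd x) j \<le> fst (snd y) j)"

definition is_lubP :: "'n outcome set \<Rightarrow> 'n outcome set \<Rightarrow> 'n outcome \<Rightarrow> bool" where
  "is_lubP S A s \<longleftrightarrow> s \<in> S \<and> (\<forall>a\<in>A. geP s a) \<and> (\<forall>t\<in>S. (\<forall>a\<in>A. geP t a) \<longrightarrow> geP t s)"

definition is_glbP :: "'n outcome set \<Rightarrow> 'n outcome set \<Rightarrow> 'n outcome \<Rightarrow> bool" where
  "is_glbP S A s \<longleftrightarrow> s \<in> S \<and> (\<forall>a\<in>A. geP a s) \<and> (\<forall>t\<in>S. (\<forall>a\<in>A. geP a t) \<longrightarrow> geP s t)"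

end

(* Written as the point (u, -v), an outcome is ordered by >=_P exactly as real^n x real^n is
   ordered componentwise. A nonempty compact subset of R^m closed under componentwise max and min
   has a greatest and a least element (maximise or minimise the coordinate sum), hence suprema and
   infima of all its subsets; so it suffices that the stable payoff points form such a set.

   For max/min, every agent takes the better (for the P-side) of his two payoffs together with his
   partner in that outcome. This is consistent because the walk alternating between the two
   matchings never leads from an agent where the first outcome is ahead to one where it is behind:
   the tied stretch in between would be a coalition whose payoff is forced under both matchings,
   so by non-degeneracy the matchings agree on it and the walk turns back. Non-degeneracy also
   makes the matching a function of the payoffs, which gives antisymmetry.

   The stable payoff points are compact since each matching contributes a closed bounded set.
   They are nonempty: on a grid of mesh delta, a Hatfield-Milgrom stable set of contracts is a
   delta-approximately stable outcome, and compactness passes to delta -> 0. *)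
theory Submission
  imports Defs "HOL-Analysis.Analysis" "HOL-Combinatorics.Orbits" "HOL-Library.Countable"
begin

section \<open>Compact sublattices of ordered Euclidean spaces\<close>

lemma compact_sup_closed_has_greatest:
  fixes K :: "'a::ordered_euclidean_space set"
  assumes "compact K" "K \<noteq> {}"
    and sup_closed: "\<And>x y. x \<in> K \<Longrightarrow> y \<in> K \<Longrightarrow> sup x y \<in> K"
  shows "\<exists>m\<in>K. \<forall>x\<in>K. x \<le> m"
proof -
  define f where "f x = (\<Sum>b\<in>Basis. x \<bullet> b)" for x :: 'a
  have "continuous_on K f" unfolding f_def by (intro continuous_intros)
  then obtain m where "m \<in> K" and m_max: "\<And>x. x \<in> K \<Longrightarrow> f x \<le> f m"
    using continuous_attains_sup[OF assms(1,2)] by blast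
  have "x \<le> m" if "x \<in> K" for x
  proof -
    let ?s = "sup m x"
    have le: "m \<bullet> b \<le> ?s \<bullet> b" if "b \<in> Basis" for b
      using that by (simp add: inner_Basis_sup_left)
    have "f ?s \<le> f m" using m_max sup_closed[OF \<open>m \<in> K\<close> that] .
    moreover have "f m \<le> f ?s" unfolding f_def using le by (rule sum_mono)
    ultimately have "f m = f ?s" by (rule antisym[rotated])
    then have "m \<bullet> b = ?s \<bullet> b" if "b \<in> Basis" for b
      using sum_mono_inv[OF _ le that] unfolding f_def by simp
    moreover have "x \<bullet> b \<le> ?s \<bullet> b" if "b \<in> Basis" for b
      using that by (simp add: inner_Basis_sup_left)
    ultimately show ?thesis by (simp add: eucl_le[of x m])
  qed
  then show ?thesis using \<open>m \<in> K\<close> by blast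
qed

lemma uminus_inf_eucl: "- inf x y = sup (- x) (- y :: 'a::ordered_euclidean_space)"
  by (rule euclidean_eqI) (simp add: inner_Basis_inf_left inner_Basis_sup_left inf_min sup_max)

lemma compact_inf_closed_has_least:
  fixes K :: "'a::ordered_euclidean_space set"
  assumes "compact K" "K \<noteq> {}"
    and inf_closed: "\<And>x y. x \<in> K \<Longrightarrow> y \<in> K \<Longrightarrow> inf x y \<in> K"
  shows "\<exists>m\<in>K. \<forall>x\<in>K. m \<le> x"
proof -
  have "sup x y \<in> uminus ` K" if "x \<in> uminus ` K" "y \<in> uminus ` K" for x y
  proof -
    have "sup x y = - inf (- x) (- y)" by (simp add: uminus_inf_eucl)
    moreover have "inf (- x) (- y) \<in> K" using that inf_closed by auto
    ultimately show ?thesis by blast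
  qed
  with assms(1,2) obtain m where "m \<in> uminus ` K" "\<forall>x\<in>uminus ` K. x \<le> m"
    using compact_sup_closed_has_greatest[of "uminus ` K"] compact_negations by blast
  then show ?thesis by (metis image_iff neg_le_iff_le)
qed

lemma compact_sublattice_has_lub:
  fixes K :: "'a::ordered_euclidean_space set"
  assumes "compact K" "K \<noteq> {}"
    and sup_closed: "\<And>x y. x \<in> K \<Longrightarrow> y \<in> K \<Longrightarrow> sup x y \<in> K"
    and inf_closed: "\<And>x y. x \<in> K \<Longrightarrow> y \<in> K \<Longrightarrow> inf x y \<in> K"
    and "A \<subseteq> K"
  shows "\<exists>s\<in>K. (\<forall>a\<in>A. a \<le> s) \<and> (\<forall>t\<in>K. (\<forall>a\<in>A. a \<le> t) \<longrightarrow> s \<le> t)"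
proof -
  let ?U = "K \<inter> (\<Inter>a\<in>A. {a..})"
  have "compact ?U" using assms(1) by (intro compact_Int_closed closed_INT) auto
  moreover obtain top where "top \<in> K" "\<forall>x\<in>K. x \<le> top"
    using compact_sup_closed_has_greatest[OF assms(1-3)] by blast
  moreover have "inf x y \<in> ?U" if "x \<in> ?U" "y \<in> ?U" for x y
    using that inf_closed by auto
  moreover have "top \<in> ?U" using calculation(2,3) \<open>A \<subseteq> K\<close> by auto
  ultimately obtain s where "s \<in> ?U" "\<forall>t\<in>?U. s \<le> t"
    using compact_inf_closed_has_least[of ?U] by blast
  then show ?thesis by auto
qed

lemma compact_sublattice_has_glb:
  fixes K :: "'a::ordered_euclidean_space set"
  assumes "compact K" "K \<noteq> {}"
    and sup_closed: "\<And>x y. x \<in> K \<Longrightarrow> y \<in> K \<Longrightarrow> sup x y \<in> K"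
    and inf_closed: "\<And>x y. x \<in> K \<Longrightarrow> y \<in> K \<Longrightarrow> inf x y \<in> K"
    and "A \<subseteq> K"
  shows "\<exists>s\<in>K. (\<forall>a\<in>A. s \<le> a) \<and> (\<forall>t\<in>K. (\<forall>a\<in>A. t \<le> a) \<longrightarrow> t \<le> s)"
proof -
  let ?L = "K \<inter> (\<Inter>a\<in>A. {..a})"
  have "compact ?L" using assms(1) by (intro compact_Int_closed closed_INT) auto
  moreover obtain bot where "bot \<in> K" "\<forall>x\<in>K. bot \<le> x"
    using compact_inf_closed_has_least[OF assms(1,2) inf_closed] by blast
  moreover have "sup x y \<in> ?L" if "x \<in> ?L" "y \<in> ?L" for x y
    using that sup_closed by auto
  moreover have "bot \<in> ?L" using calculation(2,3) \<open>A \<subseteq> K\<close> by auto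
  ultimately obtain s where "s \<in> ?L" "\<forall>t\<in>?L. t \<le> s"
    using compact_sup_closed_has_greatest[of ?L] by blast
  then show ?thesis by auto
qed

section \<open>Forced coalitions and non-degeneracy\<close>

lemma forced_Diff:
  "forced rP rQ \<sigma> CP CQ \<Longrightarrow> forced rP rQ \<sigma> CP' CQ' \<Longrightarrow> forced rP rQ \<sigma> (CP - CP') (CQ - CQ')"
  unfolding forced_def by blast

lemma minimal_forced_both_exists:
  fixes CP CQ :: "'n::finite set"
  assumes "forced rP rQ \<sigma> CP CQ" "forced rP rQ \<sigma>' CP CQ" "CP \<noteq> {} \<or> CQ \<noteq> {}"
  obtains CP' CQ' where "CP' \<subseteq> CP" "CQ' \<subseteq> CQ" "minimal_forced_both rP rQ \<sigma> \<sigma>' CP' CQ'"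
proof -
  define M where "M = {(a, b). a \<subseteq> CP \<and> b \<subseteq> CQ \<and> (a \<noteq> {} \<or> b \<noteq> {}) \<and>
    forced rP rQ \<sigma> a b \<and> forced rP rQ \<sigma>' a b}"
  have "(CP, CQ) \<in> M" using assms unfolding M_def by auto
  then obtain a b where "(a, b) \<in> M"
    and least: "\<And>a' b'. (a', b') \<in> M \<Longrightarrow> card a + card b \<le> card a' + card b'"
    using ex_has_least_nat[of "\<lambda>ab. ab \<in> M" "(CP, CQ)" "\<lambda>(a, b). card a + card b"] by auto
  have "CP' = a \<and> CQ' = b"
    if "CP' \<subseteq> a" "CQ' \<subseteq> b" "CP' \<noteq> {} \<or> CQ' \<noteq> {}"
      "forced rP rQ \<sigma> CP' CQ'" "forced rP rQ \<sigma>' CP' CQ'" for CP' CQ'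
  proof -
    have "(CP', CQ') \<in> M" using that \<open>(a, b) \<in> M\<close> unfolding M_def by auto
    then have "card a + card b \<le> card CP' + card CQ'" by (rule least)
    moreover have "card CP' \<le> card a" "card CQ' \<le> card b" using that(1,2) by (auto intro: card_mono)
    ultimately have "card CP' = card a" "card CQ' = card b" by linarith+
    then show ?thesis using that(1,2) by (meson card_subset_eq finite)
  qed
  moreover have "a \<subseteq> CP" "b \<subseteq> CQ" "a \<noteq> {} \<or> b \<noteq> {}" "forced rP rQ \<sigma> a b" "forced rP rQ \<sigma>' a b"
    using \<open>(a, b) \<in> M\<close> unfolding M_def by auto
  ultimately show thesis using that[of a b] unfolding minimal_forced_both_def by blast
qed

locale rifle_game =
  fixes \<beta> \<gamma> :: "'n::finite \<Rightarrow> 'n \<Rightarrow> real" and rP rQ :: "'n \<Rightarrow> bool"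
  assumes shares_nonneg: "\<And>i j. 0 \<le> \<beta> i j" "\<And>i j. 0 \<le> \<gamma> i j"
begin

abbreviation "\<alpha> \<equiv> alpha \<beta> \<gamma>"
abbreviation "is_stable \<equiv> rifle_stable \<beta> \<gamma> rP rQ"

lemma stableD:
  assumes "is_stable (u, v, \<sigma>)"
  shows "bij \<sigma>" "0 \<le> u i" "0 \<le> v j"
    and "\<not> rP i \<Longrightarrow> \<not> rQ j \<Longrightarrow> \<alpha> i j \<le> u i + v j"
    and "rP i \<or> rQ j \<Longrightarrow> \<beta> i j \<le> u i \<or> \<gamma> i j \<le> v j"
  using assms unfolding rifle_stable_def feasible_def by auto

text \<open>Every matched pair receives at least its value (rigid pairs by feasibility, flexible ones
  by stability), and the totals agree, so every matched pair receives exactly its value.\<close>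
lemma stable_matched_shares:
  assumes "is_stable (u, v, \<sigma>)"
  shows "u i + v (\<sigma> i) = \<alpha> i (\<sigma> i)"
    and "rP i \<or> rQ (\<sigma> i) \<Longrightarrow> u i = \<beta> i (\<sigma> i) \<and> v (\<sigma> i) = \<gamma> i (\<sigma> i)"
proof -
  note feas = assms[unfolded rifle_stable_def feasible_def, simplified]
  have ge: "\<alpha> k (\<sigma> k) \<le> u k + v (\<sigma> k)" for k
    using feas by (cases "rP k"; cases "rQ (\<sigma> k)") (auto simp: alpha_def)
  have "(\<Sum>k\<in>UNIV. u k + v (\<sigma> k)) = (\<Sum>k\<in>UNIV. \<alpha> k (\<sigma> k))"
    using feas sum.reindex_bij_betw[of \<sigma> UNIV UNIV v] by (simp add: sum.distrib bij_def)
  then show eq: "u i + v (\<sigma> i) = \<alpha> i (\<sigma> i)"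
    using sum_mono_inv[of "\<lambda>k. \<alpha> k (\<sigma> k)" UNIV "\<lambda>k. u k + v (\<sigma> k)" i] ge by simp
  show "rP i \<or> rQ (\<sigma> i) \<Longrightarrow> u i = \<beta> i (\<sigma> i) \<and> v (\<sigma> i) = \<gamma> i (\<sigma> i)"
    using feas eq by (auto simp: alpha_def)
qed

lemma forced_payoff_eq_payoff_sum:
  assumes st: "is_stable (u, v, \<sigma>)" and forced: "forced rP rQ \<sigma> CP CQ"
  shows "forced_payoff \<beta> \<gamma> \<sigma> CP CQ = (\<Sum>i\<in>CP. u i) + (\<Sum>j\<in>CQ. v j)"
proof -
  let ?Q = "{i. \<sigma> i \<in> CQ}"
  have "bij_betw \<sigma> ?Q CQ"
    using stableD(1)[OF st] by (auto simp: bij_def bij_betw_def inj_on_def image_iff surj_def)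
  then have "(\<Sum>j\<in>CQ. v j) = (\<Sum>i\<in>?Q. v (\<sigma> i))" by (simp add: sum.reindex_bij_betw)
  moreover have "(\<Sum>i\<in>CP. \<beta> i (\<sigma> i)) + (\<Sum>i\<in>?Q. \<gamma> i (\<sigma> i))
      = (\<Sum>i\<in>CP. u i) + (\<Sum>i\<in>?Q. v (\<sigma> i))"
  proof -
    have pointwise: "(if i \<in> CP then \<beta> i (\<sigma> i) else 0) + (if i \<in> ?Q then \<gamma> i (\<sigma> i) else 0)
        = (if i \<in> CP then u i else 0) + (if i \<in> ?Q then v (\<sigma> i) else 0)" for i
      using stable_matched_shares[OF st, of i] forced unfolding forced_def
      by (cases "i \<in> CP"; cases "i \<in> ?Q") (auto simp: alpha_def)
    have "(\<Sum>i\<in>UNIV. (if i \<in> CP then \<beta> i (\<sigma> i) else 0) + (if i \<in> ?Q then \<gamma> i (\<sigma> i) else 0))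
        = (\<Sum>i\<in>UNIV. (if i \<in> CP then u i else 0) + (if i \<in> ?Q then v (\<sigma> i) else 0))"
      by (rule sum.cong[OF refl pointwise])
    moreover have restrict: "(\<Sum>i\<in>C. f i) = (\<Sum>i\<in>UNIV. if i \<in> C then f i else 0)"
      for C and f :: "'n \<Rightarrow> real"
      by (simp add: sum.If_cases)
    ultimately show ?thesis by (simp only: sum.distrib flip: restrict)
  qed
  ultimately show ?thesis unfolding forced_payoff_def by simp
qed

end

locale nondegenerate_rifle_game = rifle_game +
  assumes nondegenerate: "non_degenerate \<beta> \<gamma> rP rQ"
begin

text \<open>Non-degeneracy only speaks about minimal coalitions; peeling them off one at a time
  extends it to every coalition whose payoff is forced under both matchings.\<close>
lemma matchings_agree_on_forced_coalition:
  assumes st: "is_stable (u, v, \<sigma>)" and st': "is_stable (u', v', \<sigma>')"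
  shows "forced rP rQ \<sigma> CP CQ \<Longrightarrow> forced rP rQ \<sigma>' CP CQ \<Longrightarrow>
    \<forall>i\<in>CP. u i = u' i \<Longrightarrow> \<forall>j\<in>CQ. v j = v' j \<Longrightarrow>
    (\<forall>i\<in>CP. \<sigma> i = \<sigma>' i) \<and> (\<forall>j\<in>CQ. inv \<sigma> j = inv \<sigma>' j)"
proof (induction "card CP + card CQ" arbitrary: CP CQ rule: less_induct)
  case (less CP CQ)
  show ?case
  proof (cases "CP = {} \<and> CQ = {}")
    case False
    with less.prems(1,2) obtain a b where ab: "a \<subseteq> CP" "b \<subseteq> CQ"
      and min: "minimal_forced_both rP rQ \<sigma> \<sigma>' a b"
      by (metis minimal_forced_both_exists)
    then have forced: "forced rP rQ \<sigma> a b" "forced rP rQ \<sigma>' a b"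
      unfolding minimal_forced_both_def by auto
    have "forced_payoff \<beta> \<gamma> \<sigma> a b = forced_payoff \<beta> \<gamma> \<sigma>' a b"
      using forced_payoff_eq_payoff_sum[OF st forced(1)] forced_payoff_eq_payoff_sum[OF st' forced(2)]
        less.prems(3,4) ab by (simp add: subset_iff)
    then have agree_ab: "(\<forall>i\<in>a. \<sigma> i = \<sigma>' i) \<and> (\<forall>j\<in>b. inv \<sigma> j = inv \<sigma>' j)"
      using nondegenerate min stableD(1)[OF st] stableD(1)[OF st'] unfolding non_degenerate_def by blast
    have "a \<noteq> {} \<or> b \<noteq> {}" using min unfolding minimal_forced_both_def by blast
    then have "0 < card a + card b" by (auto simp: card_gt_0_iff)
    moreover have "card a \<le> card CP" "card b \<le> card CQ" using ab by (auto intro: card_mono)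
    ultimately have "card (CP - a) + card (CQ - b) < card CP + card CQ"
      using ab by (simp add: card_Diff_subset) arith
    then have "(\<forall>i\<in>CP - a. \<sigma> i = \<sigma>' i) \<and> (\<forall>j\<in>CQ - b. inv \<sigma> j = inv \<sigma>' j)"
      using less.hyps[OF _ forced_Diff[OF less.prems(1) forced(1)] forced_Diff[OF less.prems(2) forced(2)]]
        less.prems(3,4) by blast
    with agree_ab show ?thesis by blast
  qed simp
qed

lemma stable_matching_unique:
  assumes "is_stable (u, v, \<sigma>)" "is_stable (u, v, \<sigma>')"
  shows "\<sigma> = \<sigma>'"
  using matchings_agree_on_forced_coalition[OF assms, of UNIV UNIV]
  by (auto simp: forced_def)

end

section \<open>Joins and meets of stable outcomes\<close>

context rifle_game
begin

text \<open>Gluing two stable outcomes along a set of agents that is closed under both matchings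
  keeps every matched pair's shares, hence feasibility.\<close>
lemma stable_splice:
  assumes st: "is_stable (u, v, \<sigma>)" and st': "is_stable (u', v', \<sigma>')"
    and split: "\<And>i. i \<in> AP \<longleftrightarrow> \<sigma> i \<in> AQ" "\<And>i. i \<in> AP \<longleftrightarrow> \<sigma>' i \<in> AQ"
    and U: "\<And>i. U i = (if i \<in> AP then u i else u' i)"
    and V: "\<And>j. V j = (if j \<in> AQ then v j else v' j)"
    and flex: "\<And>i j. \<not> rP i \<Longrightarrow> \<not> rQ j \<Longrightarrow> \<alpha> i j \<le> U i + V j"
    and rigid: "\<And>i j. rP i \<or> rQ j \<Longrightarrow> \<beta> i j \<le> U i \<or> \<gamma> i j \<le> V j"
  defines "\<tau> \<equiv> \<lambda>i. if i \<in> AP then \<sigma> i else \<sigma>' i"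
  shows "is_stable (U, V, \<tau>)"
proof -
  have "inj \<tau>"
  proof (rule injI)
    fix i k assume "\<tau> i = \<tau> k"
    then show "i = k"
      using split[of i] split[of k] bij_is_inj[OF stableD(1)[OF st]] bij_is_inj[OF stableD(1)[OF st']]
      unfolding \<tau>_def by (auto split: if_splits dest: injD)
  qed
  then have "bij \<tau>" by (simp add: bij_def finite_UNIV_inj_surj)
  have shares: "U i + V (\<tau> i) = \<alpha> i (\<tau> i)"
    "rP i \<or> rQ (\<tau> i) \<Longrightarrow> U i = \<beta> i (\<tau> i) \<and> V (\<tau> i) = \<gamma> i (\<tau> i)" for i
    using stable_matched_shares[OF st, of i] stable_matched_shares[OF st', of i] split[of i]
    unfolding U V \<tau>_def by auto
  have "(\<Sum>j\<in>UNIV. V j) = (\<Sum>i\<in>UNIV. V (\<tau> i))"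
    using sum.reindex_bij_betw[of \<tau> UNIV UNIV V] \<open>bij \<tau>\<close> by (simp add: bij_def)
  then have "(\<Sum>i\<in>UNIV. U i) + (\<Sum>j\<in>UNIV. V j) = (\<Sum>i\<in>UNIV. \<alpha> i (\<tau> i))"
    using shares(1) by (simp add: sum.distrib[symmetric])
  moreover have "0 \<le> U i" "0 \<le> V j" for i j
    using stableD(2,3)[OF st] stableD(2,3)[OF st'] unfolding U V by auto
  ultimately have "feasible \<beta> \<gamma> rP rQ (U, V, \<tau>)"
    using \<open>bij \<tau>\<close> shares(2) unfolding feasible_def by auto
  then show ?thesis using flex rigid unfolding rifle_stable_def by auto
qed

end

text \<open>Agents are encoded as \<^term>\<open>Inl i\<close> for \<open>p\<^sub>i\<close> and \<^term>\<open>Inr j\<close> for \<open>q\<^sub>j\<close>.\<close>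
definition alternating_succ :: "('n \<Rightarrow> 'n) \<Rightarrow> ('n \<Rightarrow> 'n) \<Rightarrow> 'n + 'n \<Rightarrow> 'n + 'n" where
  "alternating_succ \<sigma> \<sigma>' a = (case a of Inl i \<Rightarrow> Inr (\<sigma> i) | Inr j \<Rightarrow> Inl (inv \<sigma>' j))"

definition P_exceeds_at :: "('n \<Rightarrow> real) \<Rightarrow> ('n \<Rightarrow> real) \<Rightarrow> ('n \<Rightarrow> real) \<Rightarrow> ('n \<Rightarrow> real) \<Rightarrow> 'n + 'n \<Rightarrow> bool"
  where "P_exceeds_at u v u' v' a = (case a of Inl i \<Rightarrow> u' i < u i | Inr j \<Rightarrow> v j < v' j)"

lemma P_exceeds_at_asym: "P_exceeds_at u v u' v' a \<Longrightarrow> \<not> P_exceeds_at u' v' u v a"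
  by (cases a) (auto simp: P_exceeds_at_def)

definition rigid_step :: "('n \<Rightarrow> bool) \<Rightarrow> ('n \<Rightarrow> bool) \<Rightarrow> ('n \<Rightarrow> 'n) \<Rightarrow> ('n \<Rightarrow> 'n) \<Rightarrow> 'n + 'n \<Rightarrow> bool"
  where "rigid_step rP rQ \<sigma> \<sigma>' a =
    (case a of Inl i \<Rightarrow> rP i \<or> rQ (\<sigma> i) | Inr j \<Rightarrow> rP (inv \<sigma>' j) \<or> rQ j)"

lemma permutation_alternating_succ:
  fixes \<sigma> \<sigma>' :: "'n::finite \<Rightarrow> 'n"
  assumes "bij \<sigma>" "bij \<sigma>'"
  shows "permutation (alternating_succ \<sigma> \<sigma>')"
proof -
  have "inj \<sigma>" "inj (inv \<sigma>')" using assms by (simp_all add: bij_imp_bij_inv bij_is_inj)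
  then have "inj (alternating_succ \<sigma> \<sigma>')"
    by (intro injI) (auto simp: alternating_succ_def dest: injD split: sum.splits)
  then have "bij (alternating_succ \<sigma> \<sigma>')" by (simp add: finite_UNIV_inj_surj bij_def)
  then show ?thesis
    unfolding permutation_permutes using bij_imp_permutes[of _ UNIV] by (auto simp: bij_def)
qed

lemma nat_innermost_segment:
  fixes P Q :: "nat \<Rightarrow> bool"
  assumes "P 0" "Q m" "\<not> Q 0"
  obtains s t where "s < t" "P s" "Q t" "\<And>r. s < r \<Longrightarrow> r < t \<Longrightarrow> \<not> P r \<and> \<not> Q r"
proof -
  define t where "t = (LEAST r. Q r)"
  have "Q t" and t_least: "\<And>r. Q r \<Longrightarrow> t \<le> r"
    unfolding t_def using assms(2) by (auto intro: LeastI Least_le)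
  then have "0 < t" using assms(3) by (cases t) auto
  define s where "s = (GREATEST r. r < t \<and> P r)"
  have "s < t \<and> P s" unfolding s_def
    by (rule GreatestI_nat[of _ 0 t]) (use \<open>0 < t\<close> assms(1) in auto)
  moreover have s_greatest: "r \<le> s" if "r < t" "P r" for r
    unfolding s_def by (rule Greatest_le_nat[of _ _ t]) (use that in auto)
  ultimately show thesis
    using that[of s t] \<open>Q t\<close> t_least by (meson leD less_trans)
qed

lemma permutation_orbit_step_iff:
  assumes "permutation f"
  shows "f b \<in> orbit f a \<longleftrightarrow> b \<in> orbit f a"
proof
  assume "f b \<in> orbit f a"
  moreover have "b \<in> orbit f (f b)"
    using permutation_orbit_step[OF assms] permutation_self_in_orbit[OF assms] by simp
  ultimately show "b \<in> orbit f a" by (rule orbit_trans[rotated])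
qed (rule orbit.step)

locale stable_pair = rifle_game +
  fixes u v \<sigma> u' v' \<sigma>'
  assumes st: "is_stable (u, v, \<sigma>)" and st': "is_stable (u', v', \<sigma>')"
begin

abbreviation "succ \<equiv> alternating_succ \<sigma> \<sigma>'"
abbreviation "ahead \<equiv> P_exceeds_at u v u' v'"
abbreviation "behind \<equiv> P_exceeds_at u' v' u v"
abbreviation "tied a \<equiv> \<not> ahead a \<and> \<not> behind a"
abbreviation "rigid \<equiv> rigid_step rP rQ \<sigma> \<sigma>'"

lemma inv_matching_apply: "\<sigma>' (inv \<sigma>' j) = j"
  using stableD(1)[OF st'] by (simp add: bij_is_surj surj_f_inv_f)

lemma ahead_succ:
  assumes "ahead a"
  shows "\<not> behind (succ a)" and "tied (succ a) \<Longrightarrow> rigid a"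
proof -
  note sh = stable_matched_shares[OF st] and sh' = stable_matched_shares[OF st']
  have "\<not> behind (succ a) \<and> (tied (succ a) \<longrightarrow> rigid a)"
  proof (cases a)
    case (Inl i)
    then show ?thesis
      using assms sh[of i] stableD(4,5)[OF st', of i "\<sigma> i"]
      by (cases "rP i \<or> rQ (\<sigma> i)")
        (auto simp: P_exceeds_at_def alternating_succ_def rigid_step_def alpha_def)
  next
    case (Inr j)
    then show ?thesis
      using assms sh'[of "inv \<sigma>' j"] stableD(4,5)[OF st, of "inv \<sigma>' j" j] inv_matching_apply[of j]
      by (cases "rP (inv \<sigma>' j) \<or> rQ j")
        (auto simp: P_exceeds_at_def alternating_succ_def rigid_step_def alpha_def)
  qed
  then show "\<not> behind (succ a)" "tied (succ a) \<Longrightarrow> rigid a" by auto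
qed

lemma tied_behind_succ:
  assumes "tied a" "behind (succ a)"
  shows "rigid a"
proof (rule ccontr)
  assume "\<not> rigid a"
  then show False
  proof (cases a)
    case (Inl i)
    then show False
      using assms \<open>\<not> rigid a\<close> stable_matched_shares(1)[OF st, of i] stableD(4)[OF st', of i "\<sigma> i"]
      by (auto simp: P_exceeds_at_def alternating_succ_def rigid_step_def)
  next
    case (Inr j)
    then show False
      using assms \<open>\<not> rigid a\<close> stable_matched_shares(1)[OF st', of "inv \<sigma>' j"]
        stableD(4)[OF st, of "inv \<sigma>' j" j] inv_matching_apply[of j]
      by (auto simp: P_exceeds_at_def alternating_succ_def rigid_step_def)
  qed
qed

lemma succ_eq_iff: "succ a = succ b \<longleftrightarrow> a = b"
  using permutation_alternating_succ[OF stableD(1)[OF st] stableD(1)[OF st']]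
  by (meson bij_is_inj injD permutation_bijective)

lemma succ_Inr_matched: "succ (Inr (\<sigma>' k)) = Inl k"
  using stableD(1)[OF st'] by (simp add: alternating_succ_def bij_is_inj)

lemma succ_Inl_inv: "succ (Inl (inv \<sigma> j)) = Inr j"
  using stableD(1)[OF st] by (simp add: alternating_succ_def bij_is_surj surj_f_inv_f)

context
  fixes W and s t :: nat
  assumes walk: "\<And>r. W (Suc r) = succ (W r)"
    and "s < t" and ahead_start: "ahead (W s)" and behind_end: "behind (W t)"
    and tied_inside: "\<And>r. s < r \<Longrightarrow> r < t \<Longrightarrow> tied (W r)"
begin

lemma segment_exit_rigid:
  assumes "s < r" "r < t" "W (Suc r) \<notin> W ` {s<..<t}"
  shows "rigid (W r)"
proof -
  have "\<not> Suc r < t" using assms by auto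
  then have "Suc r = t" using assms(2) by simp
  then have "behind (succ (W r))" using behind_end walk[of r] by simp
  then show ?thesis using tied_behind_succ tied_inside[OF assms(1,2)] by blast
qed

lemma segment_entry_rigid:
  assumes "s < r" "r < t" "succ b = W r" "b \<notin> W ` {s<..<t}"
  shows "rigid b"
proof -
  obtain r' where r': "r = Suc r'" using assms(1) by (cases r) auto
  then have "succ (W r') = succ b" using walk[of r'] assms(3) by simp
  then have "b = W r'" by (simp add: succ_eq_iff)
  then have "r' = s" using assms r' by (auto simp: less_Suc_eq)
  then show ?thesis
    using ahead_succ(2)[OF ahead_start] tied_inside[OF assms(1,2)] assms(3) \<open>b = W r'\<close> by simp
qed

lemma tied_segment_forced:
  defines "CP \<equiv> {i. Inl i \<in> W ` {s<..<t}}" and "CQ \<equiv> {j. Inr j \<in> W ` {s<..<t}}"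
  shows "forced rP rQ \<sigma> CP CQ" and "forced rP rQ \<sigma>' CP CQ"
proof -
  show "forced rP rQ \<sigma> CP CQ" unfolding forced_def
  proof (intro allI impI)
    fix i assume "(i \<in> CP) \<noteq> (\<sigma> i \<in> CQ)"
    then consider "Inl i \<in> W ` {s<..<t}" "Inr (\<sigma> i) \<notin> W ` {s<..<t}"
      | "Inr (\<sigma> i) \<in> W ` {s<..<t}" "Inl i \<notin> W ` {s<..<t}"
      unfolding CP_def CQ_def by auto
    then have "rigid (Inl i)"
    proof cases
      case 1
      then obtain r where r: "s < r" "r < t" "W r = Inl i" by auto
      then have "W (Suc r) = Inr (\<sigma> i)" using walk[of r] by (simp add: alternating_succ_def)
      then show ?thesis using segment_exit_rigid[OF r(1,2)] 1(2) r(3) by simp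
    next
      case 2
      then obtain r where "s < r" "r < t" "W r = Inr (\<sigma> i)" by auto
      then show ?thesis
        using segment_entry_rigid[of r "Inl i"] 2(2) by (auto simp: alternating_succ_def)
    qed
    then show "rP i \<or> rQ (\<sigma> i)" by (simp add: rigid_step_def)
  qed
  show "forced rP rQ \<sigma>' CP CQ" unfolding forced_def
  proof (intro allI impI)
    fix k assume "(k \<in> CP) \<noteq> (\<sigma>' k \<in> CQ)"
    then consider "Inr (\<sigma>' k) \<in> W ` {s<..<t}" "Inl k \<notin> W ` {s<..<t}"
      | "Inl k \<in> W ` {s<..<t}" "Inr (\<sigma>' k) \<notin> W ` {s<..<t}"
      unfolding CP_def CQ_def by auto
    then have "rigid (Inr (\<sigma>' k))"
    proof cases
      case 1
      then obtain r where r: "s < r" "r < t" "W r = Inr (\<sigma>' k)" by auto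
      then have "W (Suc r) = Inl k" using walk[of r] succ_Inr_matched by simp
      then show ?thesis using segment_exit_rigid[OF r(1,2)] 1(2) r(3) by simp
    next
      case 2
      then obtain r where "s < r" "r < t" "W r = Inl k" by auto
      then show ?thesis
        using segment_entry_rigid[of r "Inr (\<sigma>' k)"] 2(2) succ_Inr_matched by auto
    qed
    then show "rP k \<or> rQ (\<sigma>' k)"
      using stableD(1)[OF st'] by (simp add: rigid_step_def bij_is_inj)
  qed
qed

end

end

locale nondegenerate_stable_pair = stable_pair + nondegenerate_rifle_game
begin

text \<open>The segment is a path alternating between \<open>\<sigma>\<close>- and \<open>\<sigma>'\<close>-edges whose two outgoing edges are
  rigid, so its payoff is forced under both matchings; the matchings then agree on it, which
  makes the walk turn back onto its start.\<close>
lemma no_tied_segment: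
  assumes walk: "\<And>r. W (Suc r) = succ (W r)"
    and "s < t" "ahead (W s)" "behind (W t)"
    and tied: "\<And>r. s < r \<Longrightarrow> r < t \<Longrightarrow> tied (W r)"
  shows False
proof -
  let ?seg = "W ` {s<..<t}"
  define CP where "CP = {i. Inl i \<in> ?seg}"
  define CQ where "CQ = {j. Inr j \<in> ?seg}"
  have "u i = u' i" if "i \<in> CP" for i
  proof -
    from that obtain r where "r \<in> {s<..<t}" "Inl i = W r" unfolding CP_def by blast
    then have "tied (Inl i)" using tied by auto
    then show ?thesis by (auto simp: P_exceeds_at_def)
  qed
  moreover have "v j = v' j" if "j \<in> CQ" for j
  proof -
    from that obtain r where "r \<in> {s<..<t}" "Inr j = W r" unfolding CQ_def by blast
    then have "tied (Inr j)" using tied by auto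
    then show ?thesis by (auto simp: P_exceeds_at_def)
  qed
  ultimately have agree: "\<forall>i\<in>CP. \<sigma> i = \<sigma>' i" "\<forall>j\<in>CQ. inv \<sigma> j = inv \<sigma>' j"
    using matchings_agree_on_forced_coalition[OF st st' tied_segment_forced[OF assms]]
    unfolding CP_def CQ_def by blast+
  have "Suc s \<noteq> t" using ahead_succ(1)[OF assms(3)] walk[of s] assms(4) by auto
  then have "Suc s < t" using \<open>s < t\<close> by simp
  then have in_seg: "W (Suc s) \<in> ?seg" by auto
  have "W (Suc (Suc s)) = W s"
  proof (cases "W (Suc s)")
    case (Inl k)
    then have "k \<in> CP" using in_seg unfolding CP_def by simp
    have "succ (W s) = succ (Inr (\<sigma>' k))" using walk[of s] Inl succ_Inr_matched by simp
    then have "W s = Inr (\<sigma>' k)" by (simp add: succ_eq_iff)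
    moreover have "W (Suc (Suc s)) = Inr (\<sigma> k)"
      using walk[of "Suc s"] Inl by (simp add: alternating_succ_def)
    ultimately show ?thesis using agree(1) \<open>k \<in> CP\<close> by simp
  next
    case (Inr j)
    then have "j \<in> CQ" using in_seg unfolding CQ_def by simp
    have "succ (W s) = succ (Inl (inv \<sigma> j))" using walk[of s] Inr succ_Inl_inv by simp
    then have "W s = Inl (inv \<sigma> j)" by (simp add: succ_eq_iff)
    moreover have "W (Suc (Suc s)) = Inl (inv \<sigma>' j)"
      using walk[of "Suc s"] Inr by (simp add: alternating_succ_def)
    ultimately show ?thesis using agree(2) \<open>j \<in> CQ\<close> by simp
  qed
  moreover have "\<not> ahead (W (Suc (Suc s)))"
  proof (cases "Suc (Suc s) = t")
    case True
    then show ?thesis using assms(4) P_exceeds_at_asym by blast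
  next
    case False
    then show ?thesis using tied \<open>Suc s < t\<close> by simp
  qed
  ultimately show False using assms(3) by simp
qed

lemma permutation_succ: "permutation succ"
  by (rule permutation_alternating_succ[OF stableD(1)[OF st] stableD(1)[OF st']])

lemma ahead_orbit_not_behind:
  assumes "ahead a" "b \<in> orbit succ a"
  shows "\<not> behind b"
proof
  assume "behind b"
  from assms(2) obtain m where "b = (succ ^^ m) a"
    unfolding orbit_altdef_permutation[OF permutation_succ] by blast
  then have "behind ((succ ^^ m) a)" using \<open>behind b\<close> by simp
  moreover have "ahead ((succ ^^ 0) a)" "\<not> behind ((succ ^^ 0) a)"
    using assms(1) P_exceeds_at_asym[OF assms(1)] by simp_all
  ultimately obtain s t where "s < t" "ahead ((succ ^^ s) a)" "behind ((succ ^^ t) a)"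
    "\<And>r. s < r \<Longrightarrow> r < t \<Longrightarrow> tied ((succ ^^ r) a)"
    using nat_innermost_segment[of "\<lambda>r. ahead ((succ ^^ r) a)" "\<lambda>r. behind ((succ ^^ r) a)" m]
    by blast
  then show False using no_tied_segment[of "\<lambda>r. (succ ^^ r) a" s t] by simp
qed

text \<open>The split is the union of the cycles of the alternating walk through the agents at which the
  first outcome is ahead.\<close>
lemma exists_matched_split:
  obtains AP AQ where "\<And>i. i \<in> AP \<longleftrightarrow> \<sigma> i \<in> AQ" "\<And>i. i \<in> AP \<longleftrightarrow> \<sigma>' i \<in> AQ"
    "\<And>i. i \<in> AP \<Longrightarrow> u' i \<le> u i" "\<And>i. i \<notin> AP \<Longrightarrow> u i \<le> u' i"
    "\<And>j. j \<in> AQ \<Longrightarrow> v j \<le> v' j" "\<And>j. j \<notin> AQ \<Longrightarrow> v' j \<le> v j"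
proof -
  define R where "R = {b. \<exists>a. ahead a \<and> b \<in> orbit succ a}"
  have R_succ: "succ b \<in> R \<longleftrightarrow> b \<in> R" for b
    unfolding R_def by (simp add: permutation_orbit_step_iff[OF permutation_succ])
  have ahead_R: "ahead b \<Longrightarrow> b \<in> R" for b
    using permutation_self_in_orbit[OF permutation_succ, of b] unfolding R_def by blast
  have R_not_behind: "\<not> behind b" if "b \<in> R" for b
  proof -
    from that obtain a where "ahead a" "b \<in> orbit succ a" unfolding R_def by blast
    then show ?thesis by (rule ahead_orbit_not_behind)
  qed
  show thesis
  proof (rule that[of "{i. Inl i \<in> R}" "{j. Inr j \<in> R}"])
    show "i \<in> {i. Inl i \<in> R} \<longleftrightarrow> \<sigma> i \<in> {j. Inr j \<in> R}" for i
      using R_succ[of "Inl i"] by (simp add: alternating_succ_def)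
    show "i \<in> {i. Inl i \<in> R} \<longleftrightarrow> \<sigma>' i \<in> {j. Inr j \<in> R}" for i
      using R_succ[of "Inr (\<sigma>' i)"] by (simp add: succ_Inr_matched)
    show "u' i \<le> u i" if "i \<in> {i. Inl i \<in> R}" for i
      using R_not_behind[of "Inl i"] that by (simp add: P_exceeds_at_def)
    show "u i \<le> u' i" if "i \<notin> {i. Inl i \<in> R}" for i
    proof -
      have "\<not> ahead (Inl i)" using ahead_R that by blast
      then show ?thesis by (simp add: P_exceeds_at_def)
    qed
    show "v j \<le> v' j" if "j \<in> {j. Inr j \<in> R}" for j
      using R_not_behind[of "Inr j"] that by (simp add: P_exceeds_at_def)
    show "v' j \<le> v j" if "j \<notin> {j. Inr j \<in> R}" for j
    proof -
      have "\<not> ahead (Inr j)" using ahead_R that by blast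
      then show ?thesis by (simp add: P_exceeds_at_def)
    qed
  qed
qed

lemma stable_join_exists: "\<exists>\<tau>. is_stable (\<lambda>i. max (u i) (u' i), \<lambda>j. min (v j) (v' j), \<tau>)"
proof -
  obtain AP AQ where split: "\<And>i. i \<in> AP \<longleftrightarrow> \<sigma> i \<in> AQ" "\<And>i. i \<in> AP \<longleftrightarrow> \<sigma>' i \<in> AQ"
    and dom: "\<And>i. i \<in> AP \<Longrightarrow> u' i \<le> u i" "\<And>i. i \<notin> AP \<Longrightarrow> u i \<le> u' i"
      "\<And>j. j \<in> AQ \<Longrightarrow> v j \<le> v' j" "\<And>j. j \<notin> AQ \<Longrightarrow> v' j \<le> v j"
    using exists_matched_split by blast
  have "max (u i) (u' i) = (if i \<in> AP then u i else u' i)"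
    "min (v j) (v' j) = (if j \<in> AQ then v j else v' j)" for i j
    using dom(1,2)[of i] dom(3,4)[of j] by auto
  then have "is_stable (\<lambda>i. max (u i) (u' i), \<lambda>j. min (v j) (v' j), \<lambda>i. if i \<in> AP then \<sigma> i else \<sigma>' i)"
  proof (rule stable_splice[OF st st' split])
    fix i j
    show "\<not> rP i \<Longrightarrow> \<not> rQ j \<Longrightarrow> \<alpha> i j \<le> max (u i) (u' i) + min (v j) (v' j)"
      using stableD(4)[OF st, of i j] stableD(4)[OF st', of i j] by (auto simp: max_def min_def)
    show "rP i \<or> rQ j \<Longrightarrow> \<beta> i j \<le> max (u i) (u' i) \<or> \<gamma> i j \<le> min (v j) (v' j)"
      using stableD(5)[OF st, of i j] stableD(5)[OF st', of i j] by auto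
  qed
  then show ?thesis by blast
qed

lemma stable_meet_exists: "\<exists>\<tau>. is_stable (\<lambda>i. min (u i) (u' i), \<lambda>j. max (v j) (v' j), \<tau>)"
proof -
  obtain AP AQ where split: "\<And>i. i \<in> AP \<longleftrightarrow> \<sigma> i \<in> AQ" "\<And>i. i \<in> AP \<longleftrightarrow> \<sigma>' i \<in> AQ"
    and dom: "\<And>i. i \<in> AP \<Longrightarrow> u' i \<le> u i" "\<And>i. i \<notin> AP \<Longrightarrow> u i \<le> u' i"
      "\<And>j. j \<in> AQ \<Longrightarrow> v j \<le> v' j" "\<And>j. j \<notin> AQ \<Longrightarrow> v' j \<le> v j"
    using exists_matched_split by blast
  have "min (u i) (u' i) = (if i \<in> AP then u' i else u i)"
    "max (v j) (v' j) = (if j \<in> AQ then v' j else v j)" for i j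
    using dom(1,2)[of i] dom(3,4)[of j] by auto
  then have "is_stable (\<lambda>i. min (u i) (u' i), \<lambda>j. max (v j) (v' j), \<lambda>i. if i \<in> AP then \<sigma>' i else \<sigma> i)"
  proof (rule stable_splice[OF st' st split(2,1)])
    fix i j
    show "\<not> rP i \<Longrightarrow> \<not> rQ j \<Longrightarrow> \<alpha> i j \<le> min (u i) (u' i) + max (v j) (v' j)"
      using stableD(4)[OF st, of i j] stableD(4)[OF st', of i j] by (auto simp: max_def min_def)
    show "rP i \<or> rQ j \<Longrightarrow> \<beta> i j \<le> min (u i) (u' i) \<or> \<gamma> i j \<le> max (v j) (v' j)"
      using stableD(5)[OF st, of i j] stableD(5)[OF st', of i j] by auto
  qed
  then show ?thesis by blast
qed

end

section \<open>Compactness of the stable payoffs\<close>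

text \<open>Negating the \<open>Q\<close>-payoffs turns \<open>\<ge>\<^sub>P\<close> into the componentwise order of \<^typ>\<open>real^'n \<times> real^'n\<close>.\<close>
definition payoff_point :: "'n::finite outcome \<Rightarrow> (real^'n) \<times> (real^'n)" where
  "payoff_point x = (\<chi> i. fst x i, \<chi> j. - fst (snd x) j)"

definition point_outcome :: "(real^'n) \<times> (real^'n) \<Rightarrow> ('n \<Rightarrow> 'n) \<Rightarrow> 'n outcome" where
  "point_outcome p \<sigma> = (\<lambda>i. fst p $ i, \<lambda>j. - snd p $ j, \<sigma>)"

lemma payoff_point_point_outcome [simp]: "payoff_point (point_outcome p \<sigma>) = p"
  by (simp add: payoff_point_def point_outcome_def vec_lambda_eta)

lemma point_outcome_payoff_point [simp]: "point_outcome (payoff_point (u, v, \<sigma>)) \<sigma> = (u, v, \<sigma>)"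
  by (simp add: payoff_point_def point_outcome_def)

lemma payoff_point_image:
  "payoff_point ` {x. P x} = (\<Union>\<sigma>. {p. P (point_outcome p \<sigma>)})"
proof (intro equalityI subsetI)
  fix p assume "p \<in> payoff_point ` {x. P x}"
  then obtain u v \<sigma> where "P (u, v, \<sigma>)" "p = payoff_point (u, v, \<sigma>)" by auto
  then show "p \<in> (\<Union>\<sigma>. {p. P (point_outcome p \<sigma>)})" by (intro UN_I[of \<sigma>]) simp_all
next
  fix p assume "p \<in> (\<Union>\<sigma>. {p. P (point_outcome p \<sigma>)})"
  then obtain \<sigma> where "P (point_outcome p \<sigma>)" by auto
  then show "p \<in> payoff_point ` {x. P x}" by (metis image_eqI mem_Collect_eq payoff_point_point_outcome)
qed

lemma geP_iff_payoff_point_le: "geP x y \<longleftrightarrow> payoff_point y \<le> payoff_point x"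
  by (simp add: geP_def payoff_point_def less_eq_prod_def less_eq_vec_def)

lemma sup_payoff_point:
  "sup (payoff_point (u, v, \<sigma>)) (payoff_point (u', v', \<sigma>'))
    = payoff_point (\<lambda>i. max (u i) (u' i), \<lambda>j. min (v j) (v' j), \<tau>)"
  by (simp add: payoff_point_def sup_prod_def sup_vec_def vec_eq_iff sup_max minus_min_eq_max)

lemma inf_payoff_point:
  "inf (payoff_point (u, v, \<sigma>)) (payoff_point (u', v', \<sigma>'))
    = payoff_point (\<lambda>i. min (u i) (u' i), \<lambda>j. max (v j) (v' j), \<tau>)"
  by (simp add: payoff_point_def inf_prod_def inf_vec_def vec_eq_iff inf_min minus_max_eq_min)

context rifle_game
begin

definition approx_stable :: "real \<Rightarrow> 'n outcome \<Rightarrow> bool" where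
  "approx_stable \<delta> x \<longleftrightarrow> feasible \<beta> \<gamma> rP rQ x \<and>
    (case x of (u, v, _) \<Rightarrow>
      (\<forall>i j. \<not> rP i \<and> \<not> rQ j \<longrightarrow> \<alpha> i j \<le> u i + v j + \<delta>) \<and>
      (\<forall>i j. rP i \<or> rQ j \<longrightarrow> \<beta> i j \<le> u i \<or> \<gamma> i j \<le> v j))"

lemma approx_stable_0: "approx_stable 0 = is_stable"
  by (auto simp: fun_eq_iff approx_stable_def rifle_stable_def)

lemma feasible_payoff_bounds:
  assumes "feasible \<beta> \<gamma> rP rQ (u, v, \<sigma>)"
  shows "u i \<le> (\<Sum>i\<in>UNIV. \<Sum>j\<in>UNIV. \<alpha> i j)" "v j \<le> (\<Sum>i\<in>UNIV. \<Sum>j\<in>UNIV. \<alpha> i j)"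
proof -
  have nonneg: "\<And>i. 0 \<le> u i" "\<And>j. 0 \<le> v j"
    and total: "(\<Sum>i\<in>UNIV. u i) + (\<Sum>j\<in>UNIV. v j) = (\<Sum>i\<in>UNIV. \<alpha> i (\<sigma> i))"
    using assms unfolding feasible_def by auto
  have "(\<Sum>i\<in>UNIV. \<alpha> i (\<sigma> i)) \<le> (\<Sum>i\<in>UNIV. \<Sum>j\<in>UNIV. \<alpha> i j)"
    using shares_nonneg by (intro sum_mono member_le_sum) (auto simp: alpha_def add_nonneg_nonneg)
  moreover have "u i \<le> (\<Sum>i\<in>UNIV. u i)" "v j \<le> (\<Sum>j\<in>UNIV. v j)" "0 \<le> (\<Sum>i\<in>UNIV. u i)" "0 \<le> (\<Sum>j\<in>UNIV. v j)"
    using nonneg by (auto intro: member_le_sum sum_nonneg)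
  ultimately show "u i \<le> (\<Sum>i\<in>UNIV. \<Sum>j\<in>UNIV. \<alpha> i j)" "v j \<le> (\<Sum>i\<in>UNIV. \<Sum>j\<in>UNIV. \<alpha> i j)"
    using total by linarith+
qed

lemma closed_approx_stable_points: "closed {p. approx_stable \<delta> (point_outcome p \<sigma>)}"
  unfolding approx_stable_def feasible_def point_outcome_def
  by (simp, intro closed_Collect_conj closed_Collect_all closed_Collect_imp closed_Collect_disj
      closed_Collect_le closed_Collect_eq closed_Collect_const open_Collect_const continuous_intros)

lemma compact_approx_stable: "compact (payoff_point ` {x. approx_stable \<delta> x})"
proof -
  define M where "M = (\<Sum>i\<in>UNIV. \<Sum>j\<in>UNIV. \<alpha> i j)"
  have "closed (payoff_point ` {x. approx_stable \<delta> x})"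
    unfolding payoff_point_image by (auto intro!: closed_UN closed_approx_stable_points)
  moreover have "payoff_point ` {x. approx_stable \<delta> x} \<subseteq> {(0, \<chi> _. - M) .. (\<chi> _. M, 0)}"
  proof
    fix p assume "p \<in> payoff_point ` {x. approx_stable \<delta> x}"
    then obtain u v \<sigma> where "feasible \<beta> \<gamma> rP rQ (u, v, \<sigma>)" "p = payoff_point (u, v, \<sigma>)"
      unfolding approx_stable_def by auto
    moreover note feasible_payoff_bounds[OF this(1)]
    moreover have "0 \<le> u i" "0 \<le> v j" for i j using calculation(1) unfolding feasible_def by auto
    ultimately show "p \<in> {(0, \<chi> _. - M) .. (\<chi> _. M, 0)}"
      by (simp add: payoff_point_def less_eq_prod_def less_eq_vec_def M_def)
  qed
  then have "bounded (payoff_point ` {x. approx_stable \<delta> x})"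
    using bounded_closed_interval bounded_subset by blast
  ultimately show ?thesis by (simp add: compact_eq_bounded_closed)
qed

end

section \<open>Existence via contracts on a grid\<close>

datatype key = Key real nat

instantiation key :: linorder
begin

fun less_eq_key :: "key \<Rightarrow> key \<Rightarrow> bool" where
  "less_eq_key (Key a m) (Key b k) = (a < b \<or> (a = b \<and> m \<le> k))"

fun less_key :: "key \<Rightarrow> key \<Rightarrow> bool" where
  "less_key (Key a m) (Key b k) = (a < b \<or> (a = b \<and> m < k))"

instance
proof
  fix x y z :: key
  show "(x < y) = (x \<le> y \<and> \<not> y \<le> x)" by (cases x; cases y) auto
  show "x \<le> x" by (cases x) auto
  show "x \<le> y \<Longrightarrow> y \<le> z \<Longrightarrow> x \<le> z" by (cases x; cases y; cases z) auto
  show "x \<le> y \<Longrightarrow> y \<le> x \<Longrightarrow> x = y" by (cases x; cases y) auto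
  show "x \<le> y \<or> y \<le> x" by (cases x; cases y) auto
qed

end

lemma key_le_share: "Key a m \<le> Key b k \<Longrightarrow> a \<le> b"
  by auto

definition p_key :: "'n::countable \<times> 'n \<times> real \<times> real \<Rightarrow> key" where
  "p_key c = Key (fst (snd (snd c))) (to_nat (fst (snd c)))"

definition q_key :: "'n::countable \<times> 'n \<times> real \<times> real \<Rightarrow> key" where
  "q_key c = Key (snd (snd (snd c))) (to_nat (fst c))"

definition chosen_by :: "('c \<Rightarrow> 'a) \<Rightarrow> ('c \<Rightarrow> 'k::linorder) \<Rightarrow> 'c set \<Rightarrow> 'c set" where
  "chosen_by agent key Y = {c \<in> Y. \<forall>d\<in>Y. agent d = agent c \<longrightarrow> key d \<le> key c}"

lemma rejected_mono: "Y \<subseteq> Y' \<Longrightarrow> Y - chosen_by agent key Y \<subseteq> Y' - chosen_by agent key Y'"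
  unfolding chosen_by_def by auto

lemma inj_on_chosen_by:
  assumes "\<And>c d. c \<in> Y \<Longrightarrow> d \<in> Y \<Longrightarrow> agent c = agent d \<Longrightarrow> key c = key d \<Longrightarrow> c = d"
  shows "inj_on agent (chosen_by agent key Y)"
proof (rule inj_onI)
  fix c d assume "c \<in> chosen_by agent key Y" "d \<in> chosen_by agent key Y" "agent c = agent d"
  then have "c \<in> Y" "d \<in> Y" "key c \<le> key d" "key d \<le> key c" unfolding chosen_by_def by auto
  then show "c = d" using assms \<open>agent c = agent d\<close> by (metis order.antisym)
qed

lemma chosen_by_exists:
  assumes "finite Y" "c \<in> Y"
  obtains a where "a \<in> chosen_by agent key Y" "agent a = agent c"
proof -
  let ?S = "{d \<in> Y. agent d = agent c}"
  have "finite ?S" "c \<in> ?S" using assms by auto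
  then obtain a where "a \<in> ?S" "key a = Max (key ` ?S)"
    by (metis (mono_tags, lifting) Max_in empty_iff finite_imageI image_iff image_is_empty)
  moreover have "\<forall>d\<in>Y. agent d = agent c \<longrightarrow> key d \<le> key a"
    using \<open>finite ?S\<close> calculation(2) by simp
  ultimately show thesis using that[of a] unfolding chosen_by_def by simp
qed

text \<open>The Hatfield--Milgrom map is monotone, so Tarski's theorem gives a fixed point: \<open>Z\<close> is the
  set of contracts the \<open>P\<close>-side may choose from, \<open>W\<close> the set the \<open>Q\<close>-side may choose from.\<close>
lemma exists_contract_fixpoint:
  fixes X :: "'c set"
  obtains Z W where "W = X - (Z - chosen_by pa kp Z)" "Z = X - (W - chosen_by qa kq W)"
proof -
  define G where "G Z = X - (let W = X - (Z - chosen_by pa kp Z) in W - chosen_by qa kq W)" for Z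
  have "mono G"
  proof
    fix Z Z' :: "'c set" assume "Z \<subseteq> Z'"
    then have "X - (Z' - chosen_by pa kp Z') \<subseteq> X - (Z - chosen_by pa kp Z)"
      using rejected_mono by blast
    then show "G Z \<subseteq> G Z'" unfolding G_def Let_def using rejected_mono by blast
  qed
  then have "lfp G = G (lfp G)" by (rule lfp_unfold)
  then show thesis using that[of "X - (lfp G - chosen_by pa kp (lfp G))" "lfp G"]
    unfolding G_def Let_def by blast
qed

lemma exists_stable_contract_set:
  fixes X :: "'c set" and pa :: "'c \<Rightarrow> 'p" and qa :: "'c \<Rightarrow> 'q" and kp kq :: "'c \<Rightarrow> 'k::linorder"
  assumes "finite X"
    and kp_inj: "\<And>c d. c \<in> X \<Longrightarrow> d \<in> X \<Longrightarrow> pa c = pa d \<Longrightarrow> kp c = kp d \<Longrightarrow> c = d"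
    and kq_inj: "\<And>c d. c \<in> X \<Longrightarrow> d \<in> X \<Longrightarrow> qa c = qa d \<Longrightarrow> kq c = kq d \<Longrightarrow> c = d"
  obtains A where "A \<subseteq> X" "inj_on pa A" "inj_on qa A"
    "\<And>c. c \<in> X \<Longrightarrow> (\<exists>a\<in>A. pa a = pa c \<and> kp c \<le> kp a) \<or> (\<exists>a\<in>A. qa a = qa c \<and> kq c \<le> kq a)"
proof -
  obtain Z W where W: "W = X - (Z - chosen_by pa kp Z)" and Z: "Z = X - (W - chosen_by qa kq W)"
    by (rule exists_contract_fixpoint)
  have "Z \<subseteq> X" "W \<subseteq> X" by (subst Z; blast) (subst W; blast)
  have A_eq: "chosen_by pa kp Z = Z \<inter> W" "chosen_by qa kq W = Z \<inter> W"
    by (subst W; use \<open>Z \<subseteq> X\<close> in \<open>auto simp: chosen_by_def\<close>)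
      (subst Z; use \<open>W \<subseteq> X\<close> in \<open>auto simp: chosen_by_def\<close>)
  define A where "A = Z \<inter> W"
  have "inj_on pa A" unfolding A_def A_eq(1)[symmetric]
    by (rule inj_on_chosen_by) (use kp_inj \<open>Z \<subseteq> X\<close> in blast)
  moreover have "inj_on qa A" unfolding A_def A_eq(2)[symmetric]
    by (rule inj_on_chosen_by) (use kq_inj \<open>W \<subseteq> X\<close> in blast)
  moreover have "(\<exists>a\<in>A. pa a = pa c \<and> kp c \<le> kp a) \<or> (\<exists>a\<in>A. qa a = qa c \<and> kq c \<le> kq a)"
    if "c \<in> X" for c
  proof (cases "c \<in> Z")
    case True
    obtain a where "a \<in> chosen_by pa kp Z" "pa a = pa c"
      using chosen_by_exists[OF finite_subset[OF \<open>Z \<subseteq> X\<close> \<open>finite X\<close>] True] .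
    moreover from this have "kp c \<le> kp a" using True unfolding chosen_by_def by auto
    ultimately show ?thesis using A_eq(1) unfolding A_def by auto
  next
    case False
    then have "c \<in> W" using W that by auto
    obtain a where "a \<in> chosen_by qa kq W" "qa a = qa c"
      using chosen_by_exists[OF finite_subset[OF \<open>W \<subseteq> X\<close> \<open>finite X\<close>] \<open>c \<in> W\<close>] .
    moreover from this have "kq c \<le> kq a" using \<open>c \<in> W\<close> unfolding chosen_by_def by auto
    ultimately show ?thesis using A_eq(2) unfolding A_def by auto
  qed
  ultimately show thesis using that \<open>Z \<subseteq> X\<close> unfolding A_def by blast
qed

lemma covering_injections_surj:
  fixes pa qa :: "'c \<Rightarrow> 'n::finite"
  assumes "inj_on pa A" "inj_on qa A" and cover: "\<And>i j. i \<in> pa ` A \<or> j \<in> qa ` A"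
  shows "pa ` A = UNIV" "qa ` A = UNIV"
proof -
  have card_eq: "card (pa ` A) = card (qa ` A)" using assms(1,2) by (simp add: card_image)
  show "pa ` A = UNIV"
  proof (rule ccontr)
    assume "pa ` A \<noteq> UNIV"
    then obtain i where "i \<notin> pa ` A" by auto
    have "card (pa ` A) < card (UNIV :: 'n set)" using \<open>pa ` A \<noteq> UNIV\<close> by (intro psubset_card_mono) auto
    then have "qa ` A \<noteq> UNIV" using card_eq by auto
    then obtain j where "j \<notin> qa ` A" by auto
    with \<open>i \<notin> pa ` A\<close> show False using cover by blast
  qed
  then show "qa ` A = UNIV" using card_eq card_subset_eq[of UNIV "qa ` A"] by simp
qed

lemma perfect_contract_set_outcome:
  fixes A :: "('n::finite \<times> 'n \<times> real \<times> real) set"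
  assumes inj_p: "inj_on fst A" and inj_q: "inj_on (\<lambda>c. fst (snd c)) A"
    and "fst ` A = UNIV" "(\<lambda>c. fst (snd c)) ` A = UNIV"
  obtains \<sigma> u v where "bij \<sigma>" "\<And>i. (i, \<sigma> i, u i, v (\<sigma> i)) \<in> A"
proof -
  define c where "c i = the_inv_into A fst i" for i
  define d where "d j = the_inv_into A (\<lambda>c. fst (snd c)) j" for j
  have c: "c i \<in> A" "fst (c i) = i" for i
    unfolding c_def using assms(3) inj_p by (auto intro: the_inv_into_into f_the_inv_into_f)
  have d: "d j \<in> A" "fst (snd (d j)) = j" for j
    unfolding d_def using assms(4) inj_q by (auto intro: the_inv_into_into f_the_inv_into_f)
  define \<sigma> where "\<sigma> i = fst (snd (c i))" for i
  have dc: "d (\<sigma> i) = c i" for i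
    using inj_onD[OF inj_q _ d(1) c(1)] d(2) unfolding \<sigma>_def by simp
  have "inj \<sigma>"
  proof (rule injI)
    fix i k assume "\<sigma> i = \<sigma> k"
    then have "c i = c k" using dc by metis
    then show "i = k" using c(2) by metis
  qed
  then have "bij \<sigma>" by (simp add: bij_def finite_UNIV_inj_surj)
  moreover have "(i, \<sigma> i, fst (snd (snd (c i))), snd (snd (snd (d (\<sigma> i))))) \<in> A" for i
    using c[of i] unfolding dc unfolding \<sigma>_def by (metis prod.collapse)
  ultimately show thesis
    using that[of \<sigma> "\<lambda>i. fst (snd (snd (c i)))" "\<lambda>j. snd (snd (snd (d j)))"] by blast
qed

definition share_grid :: "real \<Rightarrow> real \<Rightarrow> real set" where
  "share_grid \<delta> c = {real k * \<delta> | k. real k * \<delta> \<le> c}"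

lemma finite_share_grid:
  assumes "0 < \<delta>"
  shows "finite (share_grid \<delta> c)"
proof -
  have "share_grid \<delta> c \<subseteq> (\<lambda>k. real k * \<delta>) ` {..nat \<lceil>c / \<delta>\<rceil>}"
  proof
    fix a assume "a \<in> share_grid \<delta> c"
    then obtain k where "a = real k * \<delta>" "real k * \<delta> \<le> c" unfolding share_grid_def by auto
    moreover from this have "real k \<le> c / \<delta>" using assms by (simp add: le_divide_eq)
    then have "int k \<le> \<lceil>c / \<delta>\<rceil>" by linarith
    then have "k \<le> nat \<lceil>c / \<delta>\<rceil>" by (simp add: le_nat_iff)
    ultimately show "a \<in> (\<lambda>k. real k * \<delta>) ` {..nat \<lceil>c / \<delta>\<rceil>}" by auto
  qed
  then show ?thesis by (rule finite_subset) auto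
qed

lemma share_grid_step:
  assumes "0 < \<delta>" "0 \<le> x" "x + \<delta> \<le> c"
  obtains a where "a \<in> share_grid \<delta> c" "x < a" "a \<le> x + \<delta>"
proof -
  define k where "k = nat \<lfloor>x / \<delta>\<rfloor> + 1"
  have "real k = of_int \<lfloor>x / \<delta>\<rfloor> + 1" unfolding k_def using assms(1,2) by simp
  then have "x / \<delta> < real k" "real k \<le> x / \<delta> + 1" by linarith+
  then have "x < real k * \<delta>" "real k * \<delta> \<le> x + \<delta>"
    using assms(1) by (simp_all add: field_simps)
  moreover from this have "real k * \<delta> \<in> share_grid \<delta> c"
    using assms(3) unfolding share_grid_def by auto
  ultimately show thesis using that by blast
qed

context rifle_game
begin

text \<open>A contract \<open>(i, j, a, b)\<close> gives \<open>a\<close> to \<open>p\<^sub>i\<close> and \<open>b\<close> to \<open>q\<^sub>j\<close>; flexible pairs may split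
  their value only on a grid of mesh \<open>\<delta>\<close>.\<close>
definition contracts :: "real \<Rightarrow> ('n \<times> 'n \<times> real \<times> real) set" where
  "contracts \<delta> = {(i, j, \<beta> i j, \<gamma> i j) | i j. rP i \<or> rQ j} \<union>
     {(i, j, a, \<alpha> i j - a) | i j a. \<not> rP i \<and> \<not> rQ j \<and> a \<in> share_grid \<delta> (\<alpha> i j)}"

lemma finite_contracts:
  assumes "0 < \<delta>"
  shows "finite (contracts \<delta>)"
proof -
  have "contracts \<delta> \<subseteq> (\<lambda>(i, j). (i, j, \<beta> i j, \<gamma> i j)) ` UNIV \<union>
      (\<Union>(i, j). (\<lambda>a. (i, j, a, \<alpha> i j - a)) ` share_grid \<delta> (\<alpha> i j))"
    unfolding contracts_def by auto
  then show ?thesis by (rule finite_subset) (use finite_share_grid[OF assms] in auto)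
qed

lemma contract_shares:
  assumes "(i, j, a, b) \<in> contracts \<delta>" "0 \<le> \<delta>"
  shows "rP i \<or> rQ j \<Longrightarrow> a = \<beta> i j \<and> b = \<gamma> i j"
    and "\<not> rP i \<Longrightarrow> \<not> rQ j \<Longrightarrow> a + b = \<alpha> i j \<and> 0 \<le> a \<and> 0 \<le> b"
  using assms unfolding contracts_def share_grid_def by auto

lemma contract_determined:
  assumes "(i, j, a, b) \<in> contracts \<delta>" "(i, j, a', b') \<in> contracts \<delta>" "0 \<le> \<delta>" "a = a' \<or> b = b'"
  shows "(i, j, a, b) = (i, j, a', b')"
  using contract_shares[OF assms(1,3)] contract_shares[OF assms(2,3)] assms(4)
  by (cases "rP i \<or> rQ j") auto

lemma feasible_of_contracts:
  assumes "0 \<le> \<delta>" "bij \<sigma>" and in_contracts: "\<And>i. (i, \<sigma> i, u i, v (\<sigma> i)) \<in> contracts \<delta>"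
  shows "feasible \<beta> \<gamma> rP rQ (u, v, \<sigma>)"
proof -
  note shares = contract_shares[OF in_contracts \<open>0 \<le> \<delta>\<close>]
  have pair: "u i + v (\<sigma> i) = \<alpha> i (\<sigma> i)" "0 \<le> u i" "0 \<le> v (\<sigma> i)" for i
    using shares[of i] shares_nonneg[of i "\<sigma> i"] by (cases "rP i \<or> rQ (\<sigma> i)"; auto simp: alpha_def)+
  have "0 \<le> v j" for j using pair(3)[of "inv \<sigma> j"] \<open>bij \<sigma>\<close> by (simp add: bij_is_surj surj_f_inv_f)
  moreover have "(\<Sum>j\<in>UNIV. v j) = (\<Sum>i\<in>UNIV. v (\<sigma> i))"
    using sum.reindex_bij_betw[of \<sigma> UNIV UNIV v] \<open>bij \<sigma>\<close> by (simp add: bij_def)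
  then have "(\<Sum>i\<in>UNIV. u i) + (\<Sum>j\<in>UNIV. v j) = (\<Sum>i\<in>UNIV. \<alpha> i (\<sigma> i))"
    using pair(1) by (simp add: sum.distrib[symmetric])
  ultimately show ?thesis using \<open>bij \<sigma>\<close> pair(2) shares(1) unfolding feasible_def by auto
qed

lemma contract_p_key_inj:
  assumes "c \<in> contracts \<delta>" "d \<in> contracts \<delta>" "0 \<le> \<delta>" "fst c = fst d" "p_key c = p_key d"
  shows "c = d"
proof -
  obtain i j a b i' j' a' b' where "c = (i, j, a, b)" "d = (i', j', a', b')" by (metis prod.collapse)
  with assms show ?thesis using contract_determined[of i j a b \<delta> a' b'] by (simp add: p_key_def)
qed

lemma contract_q_key_inj:
  assumes "c \<in> contracts \<delta>" "d \<in> contracts \<delta>" "0 \<le> \<delta>" "fst (snd c) = fst (snd d)" "q_key c = q_key d"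
  shows "c = d"
proof -
  obtain i j a b i' j' a' b' where "c = (i, j, a, b)" "d = (i', j', a', b')" by (metis prod.collapse)
  with assms show ?thesis using contract_determined[of i j a b \<delta> a' b'] by (simp add: q_key_def)
qed

lemma contracts_cover_pairs:
  assumes "0 \<le> \<delta>"
  shows "\<exists>c\<in>contracts \<delta>. fst c = i \<and> fst (snd c) = j"
proof (cases "rP i \<or> rQ j")
  case True
  then have "(i, j, \<beta> i j, \<gamma> i j) \<in> contracts \<delta>" unfolding contracts_def by blast
  then show ?thesis by force
next
  case False
  have "real 0 * \<delta> \<in> share_grid \<delta> (\<alpha> i j)"
    using shares_nonneg[of i j] unfolding share_grid_def alpha_def by fastforce
  then have "(i, j, 0, \<alpha> i j - 0) \<in> contracts \<delta>" using False unfolding contracts_def by fastforce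
  then show ?thesis by force
qed

text \<open>Every pair has some contract, so a stable set of contracts covers every agent and is a
  perfect matching.\<close>
lemma exists_unblocked_contract_outcome:
  assumes "0 < \<delta>"
  obtains \<sigma> u v where "bij \<sigma>" "\<And>i. (i, \<sigma> i, u i, v (\<sigma> i)) \<in> contracts \<delta>"
    "\<And>i j a b. (i, j, a, b) \<in> contracts \<delta> \<Longrightarrow> a \<le> u i \<or> b \<le> v j"
proof -
  let ?X = "contracts \<delta>" and ?q = "\<lambda>c :: 'n \<times> 'n \<times> real \<times> real. fst (snd c)"
  have "0 \<le> \<delta>" using assms by simp
  obtain A where "A \<subseteq> ?X" "inj_on fst A" "inj_on ?q A" and dominated:
    "\<And>c. c \<in> ?X \<Longrightarrow> (\<exists>a\<in>A. fst a = fst c \<and> p_key c \<le> p_key a) \<or> (\<exists>a\<in>A. ?q a = ?q c \<and> q_key c \<le> q_key a)"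
    using exists_stable_contract_set[where pa = fst and qa = ?q and kp = p_key and kq = q_key,
        OF finite_contracts[OF assms] contract_p_key_inj[OF _ _ \<open>0 \<le> \<delta>\<close>]
        contract_q_key_inj[OF _ _ \<open>0 \<le> \<delta>\<close>]]
    by blast
  have "i \<in> fst ` A \<or> j \<in> ?q ` A" for i j
  proof -
    obtain c where "c \<in> ?X" "fst c = i" "?q c = j" using contracts_cover_pairs[OF \<open>0 \<le> \<delta>\<close>] by blast
    then show ?thesis using dominated[of c] unfolding image_iff by metis
  qed
  then obtain \<sigma> u v where "bij \<sigma>" and accepted: "\<And>i. (i, \<sigma> i, u i, v (\<sigma> i)) \<in> A"
    using perfect_contract_set_outcome covering_injections_surj \<open>inj_on fst A\<close> \<open>inj_on ?q A\<close> by metis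
  have accepted_p: "a = (i, \<sigma> i, u i, v (\<sigma> i))" if "a \<in> A" "fst a = i" for a i
    using inj_onD[OF \<open>inj_on fst A\<close> _ that(1) accepted[of i]] that(2) by simp
  have accepted_q: "a = (inv \<sigma> j, j, u (inv \<sigma> j), v j)" if "a \<in> A" "?q a = j" for a j
    using inj_onD[OF \<open>inj_on ?q A\<close> _ that(1) accepted[of "inv \<sigma> j"]] that(2) \<open>bij \<sigma>\<close>
    by (simp add: bij_is_surj surj_f_inv_f)
  have "a \<le> u i \<or> b \<le> v j" if "(i, j, a, b) \<in> ?X" for i j a b
    using dominated[OF that] accepted_p accepted_q unfolding p_key_def q_key_def
    by (auto dest!: key_le_share)
  then show thesis using that \<open>bij \<sigma>\<close> accepted \<open>A \<subseteq> ?X\<close> by blast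
qed

text \<open>A flexible pair blocking by more than \<open>\<delta>\<close> would have a grid contract that gives both
  partners more.\<close>
lemma approx_stable_exists:
  assumes "0 < \<delta>"
  shows "\<exists>x. approx_stable \<delta> x"
proof -
  obtain \<sigma> u v where "bij \<sigma>" and accepted: "\<And>i. (i, \<sigma> i, u i, v (\<sigma> i)) \<in> contracts \<delta>"
    and unblocked: "\<And>i j a b. (i, j, a, b) \<in> contracts \<delta> \<Longrightarrow> a \<le> u i \<or> b \<le> v j"
    using exists_unblocked_contract_outcome[OF assms] by blast
  have feasible: "feasible \<beta> \<gamma> rP rQ (u, v, \<sigma>)"
    using feasible_of_contracts[OF _ \<open>bij \<sigma>\<close> accepted] assms by simp
  have "\<alpha> i j \<le> u i + v j + \<delta>" if "\<not> rP i" "\<not> rQ j" for i j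
  proof (rule ccontr)
    assume violated: "\<not> ?thesis"
    moreover have "0 \<le> u i" "0 \<le> v j" using feasible unfolding feasible_def by auto
    ultimately obtain a where "a \<in> share_grid \<delta> (\<alpha> i j)" "u i < a" "a \<le> u i + \<delta>"
      using share_grid_step[OF assms, of "u i" "\<alpha> i j"] by force
    then have "(i, j, a, \<alpha> i j - a) \<in> contracts \<delta>" using that unfolding contracts_def by blast
    then show False using unblocked \<open>u i < a\<close> \<open>a \<le> u i + \<delta>\<close> violated by force
  qed
  moreover have "\<beta> i j \<le> u i \<or> \<gamma> i j \<le> v j" if "rP i \<or> rQ j" for i j
    using unblocked[of i j] that unfolding contracts_def by blast
  ultimately have "approx_stable \<delta> (u, v, \<sigma>)"
    using feasible unfolding approx_stable_def by auto
  then show ?thesis by blast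
qed

lemma approx_stable_mono: "\<delta> \<le> \<delta>' \<Longrightarrow> approx_stable \<delta> x \<Longrightarrow> approx_stable \<delta>' x"
  unfolding approx_stable_def by (fastforce split: prod.splits)

text \<open>By compactness the approximately stable payoff sets for \<open>\<delta> = 1/(n+1)\<close> have a common point;
  its flexibility constraints hold for every \<open>\<delta>\<close>, and they do not depend on the matching.\<close>
lemma stable_exists: "\<exists>x. is_stable x"
proof -
  define F where "F n = payoff_point ` {x. approx_stable (1 / Suc n) x}" for n
  have "\<Inter>(range F) \<noteq> {}"
  proof (rule compact_nest)
    show "compact (F n)" for n unfolding F_def by (rule compact_approx_stable)
    show "F n \<noteq> {}" for n using approx_stable_exists[of "1 / Suc n"] unfolding F_def by auto
    show "F n \<subseteq> F m" if "m \<le> n" for m n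
      using approx_stable_mono[of "1 / Suc n" "1 / Suc m"] that unfolding F_def
      by (auto simp: frac_le)
  qed
  then obtain p where "p \<in> F n" for n by blast
  then have "\<exists>\<sigma>. approx_stable (1 / Suc n) (point_outcome p \<sigma>)" for n
    unfolding F_def payoff_point_image by blast
  then obtain \<sigma> where "approx_stable 1 (point_outcome p \<sigma>)"
    by (metis div_by_1 of_nat_1 One_nat_def)
  moreover have "\<alpha> i j \<le> fst p $ i - snd p $ j" if "\<not> rP i" "\<not> rQ j" for i j
  proof (rule field_le_epsilon)
    fix e :: real assume "0 < e"
    then obtain n where "1 / real (Suc n) < e" by (rule nat_approx_posE)
    moreover obtain \<sigma>' where "approx_stable (1 / Suc n) (point_outcome p \<sigma>')"
      using \<open>\<And>n. \<exists>\<sigma>. approx_stable (1 / Suc n) (point_outcome p \<sigma>)\<close> by blast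
    ultimately show "\<alpha> i j \<le> fst p $ i - snd p $ j + e"
      using that unfolding approx_stable_def point_outcome_def by fastforce
  qed
  ultimately have "approx_stable 0 (point_outcome p \<sigma>)"
    unfolding approx_stable_def point_outcome_def by auto
  then show ?thesis unfolding approx_stable_0 by blast
qed

abbreviation "stable_points \<equiv> payoff_point ` {x. is_stable x}"

lemma compact_stable_points: "compact stable_points"
  using compact_approx_stable[of 0] by (simp add: approx_stable_0)

lemma stable_points_ne: "stable_points \<noteq> {}"
  using stable_exists by blast

end

section \<open>The lattice of stable outcomes\<close>

context nondegenerate_rifle_game
begin

lemma stable_points_sup_inf_closed:
  assumes "p \<in> stable_points" "q \<in> stable_points"
  shows "sup p q \<in> stable_points" "inf p q \<in> stable_points"
proof -
  obtain u v \<sigma> u' v' \<sigma>' where st: "is_stable (u, v, \<sigma>)" "is_stable (u', v', \<sigma>')"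
    and pq: "p = payoff_point (u, v, \<sigma>)" "q = payoff_point (u', v', \<sigma>')"
    using assms by auto
  interpret nondegenerate_stable_pair \<beta> \<gamma> rP rQ u v \<sigma> u' v' \<sigma>'
    using st by unfold_locales
  obtain \<tau> where "is_stable (\<lambda>i. max (u i) (u' i), \<lambda>j. min (v j) (v' j), \<tau>)"
    using stable_join_exists by blast
  then show "sup p q \<in> stable_points" unfolding pq sup_payoff_point[where \<tau> = \<tau>] by blast
  obtain \<tau>' where "is_stable (\<lambda>i. min (u i) (u' i), \<lambda>j. max (v j) (v' j), \<tau>')"
    using stable_meet_exists by blast
  then show "inf p q \<in> stable_points" unfolding pq inf_payoff_point[where \<tau> = \<tau>'] by blast
qed

lemma stable_geP_antisym:
  assumes "is_stable x" "is_stable y" "geP x y" "geP y x"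
  shows "x = y"
proof -
  obtain u v \<sigma> u' v' \<sigma>' where xy: "x = (u, v, \<sigma>)" "y = (u', v', \<sigma>')" by (metis prod.collapse)
  have "u = u'" "v = v'" using assms(3,4) unfolding xy geP_def by (auto intro!: ext order.antisym)
  then show ?thesis using stable_matching_unique assms(1,2) unfolding xy by blast
qed

lemma stable_exists_lubP:
  assumes "A \<subseteq> {x. is_stable x}"
  shows "\<exists>s. is_lubP {x. is_stable x} A s"
proof -
  have "payoff_point ` A \<subseteq> stable_points" using assms by auto
  from compact_sublattice_has_lub[OF compact_stable_points stable_points_ne stable_points_sup_inf_closed this]
  obtain p where "p \<in> stable_points" and upper: "\<forall>a\<in>payoff_point ` A. a \<le> p"
    and least: "\<forall>t\<in>stable_points. (\<forall>a\<in>payoff_point ` A. a \<le> t) \<longrightarrow> p \<le> t"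
    by blast
  then obtain s where "is_stable s" "p = payoff_point s" by blast
  then have "is_lubP {x. is_stable x} A s"
    unfolding is_lubP_def geP_iff_payoff_point_le using upper least by auto
  then show ?thesis ..
qed

lemma stable_exists_glbP:
  assumes "A \<subseteq> {x. is_stable x}"
  shows "\<exists>s. is_glbP {x. is_stable x} A s"
proof -
  have "payoff_point ` A \<subseteq> stable_points" using assms by auto
  from compact_sublattice_has_glb[OF compact_stable_points stable_points_ne stable_points_sup_inf_closed this]
  obtain p where "p \<in> stable_points" and lower: "\<forall>a\<in>payoff_point ` A. p \<le> a"
    and greatest: "\<forall>t\<in>stable_points. (\<forall>a\<in>payoff_point ` A. t \<le> a) \<longrightarrow> t \<le> p"
    by blast
  then obtain s where "is_stable s" "p = payoff_point s" by blast
  then have "is_glbP {x. is_stable x} A s"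
    unfolding is_glbP_def geP_iff_payoff_point_le using lower greatest by auto
  then show ?thesis ..
qed

end

theorem theorem3:
  fixes \<beta> \<gamma> :: "'n::finite \<Rightarrow> 'n \<Rightarrow> real" and rP rQ :: "'n \<Rightarrow> bool"
  assumes "\<forall>i j. 0 \<le> \<beta> i j \<and> 0 \<le> \<gamma> i j"
    and "non_degenerate \<beta> \<gamma> rP rQ"
  shows "(\<forall>x y. rifle_stable \<beta> \<gamma> rP rQ x \<and> rifle_stable \<beta> \<gamma> rP rQ y \<and> geP x y \<and> geP y x \<longrightarrow> x = y)
       \<and> (\<forall>A \<subseteq> {x. rifle_stable \<beta> \<gamma> rP rQ x}.
            (\<exists>s. is_lubP {x. rifle_stable \<beta> \<gamma> rP rQ x} A s) \<and> (\<exists>s. is_glbP {x. rifle_stable \<beta> \<gamma> rP rQ x} A s))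
       \<and> (\<exists>!x. rifle_stable \<beta> \<gamma> rP rQ x \<and> (\<forall>y. rifle_stable \<beta> \<gamma> rP rQ y \<longrightarrow> geP x y))
       \<and> (\<exists>!x. rifle_stable \<beta> \<gamma> rP rQ x \<and> (\<forall>y. rifle_stable \<beta> \<gamma> rP rQ y \<longrightarrow> geP y x))"
proof -
  interpret nondegenerate_rifle_game \<beta> \<gamma> rP rQ
    using assms by unfold_locales auto
  have "\<exists>!x. is_stable x \<and> (\<forall>y. is_stable y \<longrightarrow> geP x y)"
    using stable_exists_lubP[of "{x. is_stable x}"] stable_geP_antisym
    unfolding is_lubP_def by blast
  moreover have "\<exists>!x. is_stable x \<and> (\<forall>y. is_stable y \<longrightarrow> geP y x)"
    using stable_exists_glbP[of "{x. is_stable x}"] stable_geP_antisym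
    unfolding is_glbP_def by blast
  ultimately show ?thesis
    using stable_geP_antisym stable_exists_lubP stable_exists_glbP by blast
qed

end
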